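(* Every translation from limit-deterministic Büchi automata to deterministic parity automata produces, in the worst case, for input LDBAs with $n$ states, output automata with $2^{\Omega(n\log n)}$ states.
   Context: A limit-deterministic Büchi automaton (LDBA) is a nondeterministic Büchi automaton $(Q,q_0,\Sigma,\delta,\alpha)$ together with $Q_d\subseteq Q$ such that all accepting transitions are within $Q_d$, the transition relation is deterministic on $Q_d$, and $Q_d$ is closed under successors. A deterministic parity automaton has a deterministic transition function and a coloring of transitions by positive integers; a word is accepted iff the minimal color seen infinitely often on its run is even. A translation maps each LDBA to a DPA recognizing the same language. *)

theory Defs
  imports Complex_Main
begin

text \<open>Omega-words over letters of type 'a are functions nat => 'a.
  States of all automata are natural numbers (any finite state set can be renamed).\<close>

record 'a ldba =
  lstates :: "nat set"
  linit   :: nat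
  lalph   :: "'a set"
  ltrans  :: "nat \<Rightarrow> 'a \<Rightarrow> nat set"
  lacc    :: "(nat \<times> 'a \<times> nat) set"
  ldet    :: "nat set"

definition is_ldba :: "'a ldba \<Rightarrow> bool" where
  "is_ldba A \<longleftrightarrow>
     finite (lstates A) \<and> finite (lalph A) \<and> linit A \<in> lstates A \<and>
     (\<forall>q\<in>lstates A. \<forall>a\<in>lalph A. ltrans A q a \<subseteq> lstates A) \<and>
     lacc A \<subseteq> {(q, a, q'). q \<in> lstates A \<and> a \<in> lalph A \<and> q' \<in> ltrans A q a} \<and>
     ldet A \<subseteq> lstates A \<and>
     (\<forall>(q, a, q') \<in> lacc A. q \<in> ldet A \<and> q' \<in> ldet A) \<and>
     (\<forall>q\<in>ldet A. \<forall>a\<in>lalph A. card (ltrans A q a) \<le> 1) \<and>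
     (\<forall>q\<in>ldet A. \<forall>a\<in>lalph A. ltrans A q a \<subseteq> ldet A)"

definition ldba_run :: "'a ldba \<Rightarrow> (nat \<Rightarrow> 'a) \<Rightarrow> (nat \<Rightarrow> nat) \<Rightarrow> bool" where
  "ldba_run A w r \<longleftrightarrow> r 0 = linit A \<and> (\<forall>i. r (Suc i) \<in> ltrans A (r i) (w i))"

definition ldba_lang :: "'a ldba \<Rightarrow> (nat \<Rightarrow> 'a) set" where
  "ldba_lang A = {w. (\<forall>i. w i \<in> lalph A) \<and>
      (\<exists>r. ldba_run A w r \<and> (\<exists>\<^sub>\<infinity> i. (r i, w i, r (Suc i)) \<in> lacc A))}"

record 'a dpa =
  dstates :: "nat set"
  dinit   :: nat
  dalph   :: "'a set"
  dtrans  :: "nat \<Rightarrow> 'a \<Rightarrow> nat"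
  dcol    :: "nat \<Rightarrow> 'a \<Rightarrow> nat"

definition is_dpa :: "'a dpa \<Rightarrow> bool" where
  "is_dpa D \<longleftrightarrow>
     finite (dstates D) \<and> finite (dalph D) \<and> dinit D \<in> dstates D \<and>
     (\<forall>q\<in>dstates D. \<forall>a\<in>dalph D. dtrans D q a \<in> dstates D \<and> dcol D q a > 0)"

definition dpa_run :: "'a dpa \<Rightarrow> (nat \<Rightarrow> 'a) \<Rightarrow> nat \<Rightarrow> nat" where
  "dpa_run D w = rec_nat (dinit D) (\<lambda>i q. dtrans D q (w i))"

definition dpa_lang :: "'a dpa \<Rightarrow> (nat \<Rightarrow> 'a) set" where
  "dpa_lang D = {w. (\<forall>i. w i \<in> dalph D) \<and>
      even (LEAST k. \<exists>\<^sub>\<infinity> i. dcol D (dpa_run D w i) (w i) = k)}"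

end

theory Submission
  imports Defs "HOL-Library.Nat_Bijection" "HOL-Library.Infinite_Set"
begin

text \<open>
  The witnesses are LDBAs \<open>A\<^sub>m\<close> with \<open>m + 1\<close> states over the letters \<open>(i, J)\<close> with
  \<open>i < m\<close> and \<open>J \<subseteq> {0..<m}\<close>; a word is accepted iff some index \<open>i\<close> is the first component
  of infinitely many letters but lies in the second component of only finitely many.

  Let \<open>D\<close> be a DPA for this language and \<open>I\<close> a set of indices. From every reachable state,
  the letters over \<open>I\<close> reach at least \<open>|I|!\<close> states. Indeed, for \<open>i \<in> I\<close> let \<open>B\<^sub>i\<close> be a
  bottom strongly connected component of \<open>D\<close> restricted to the letters \<open>(k, J)\<close> over \<open>I\<close> with
  \<open>i \<notin> J\<close>. These include all letters over \<open>I - {i}\<close>, so by induction \<open>|B\<^sub>i| \<ge> (|I| - 1)!\<close>.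
  The \<open>B\<^sub>i\<close> are pairwise disjoint: a state in \<open>B\<^sub>i \<inter> B\<^sub>j\<close> carries an accepting cycle
  through \<open>(i, I - {i})\<close> and one through \<open>(j, I - {j})\<close>; their concatenation is accepting as
  well, because the least colour of a concatenation is the smaller of the two least colours, yet
  every index occurring as a first component on it lies in the second component of one of these
  two letters. Hence \<open>D\<close> has at least \<open>m! = 2\<^bsup>\<Omega>(m log m)\<^esup>\<close> states.
\<close>

subsection \<open>Finite runs, reachability and lassos of deterministic automata\<close>

fun dpa_steps :: "'a dpa \<Rightarrow> nat \<Rightarrow> 'a list \<Rightarrow> nat" where
  "dpa_steps D p [] = p"
| "dpa_steps D p (a # xs) = dpa_steps D (dtrans D p a) xs"

lemma dpa_steps_append [simp]:
  "dpa_steps D p (xs @ ys) = dpa_steps D (dpa_steps D p xs) ys"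
  by (induction xs arbitrary: p) auto

lemma dpa_run_eq_steps: "dpa_run D w k = dpa_steps D (dinit D) (map w [0..<k])"
  by (induction k) (auto simp: dpa_run_def)

lemma dpa_steps_in_dstates:
  "is_dpa D \<Longrightarrow> p \<in> dstates D \<Longrightarrow> set xs \<subseteq> dalph D \<Longrightarrow> dpa_steps D p xs \<in> dstates D"
  by (induction xs arbitrary: p) (auto simp: is_dpa_def)

definition reachable :: "'a dpa \<Rightarrow> 'a set \<Rightarrow> nat \<Rightarrow> nat set" where
  "reachable D S p = {dpa_steps D p xs | xs. set xs \<subseteq> S}"

lemma reachableI: "set xs \<subseteq> S \<Longrightarrow> dpa_steps D p xs \<in> reachable D S p"
  unfolding reachable_def by blast

lemma reachable_refl: "p \<in> reachable D S p"
  using reachableI[of "[]"] by simp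

lemma reachable_trans:
  assumes "q \<in> reachable D S p" "q' \<in> reachable D S q"
  shows "q' \<in> reachable D S p"
proof -
  obtain xs ys where "set xs \<subseteq> S" "q = dpa_steps D p xs" "set ys \<subseteq> S" "q' = dpa_steps D q ys"
    using assms unfolding reachable_def by blast
  then show ?thesis using reachableI[of "xs @ ys" S D p] by simp
qed

lemma reachable_mono: "S \<subseteq> S' \<Longrightarrow> reachable D S p \<subseteq> reachable D S' p"
  unfolding reachable_def by blast

lemma reachable_subset_dstates:
  "is_dpa D \<Longrightarrow> p \<in> dstates D \<Longrightarrow> S \<subseteq> dalph D \<Longrightarrow> reachable D S p \<subseteq> dstates D"
  unfolding reachable_def using dpa_steps_in_dstates by blast

lemma finite_reachable:
  "is_dpa D \<Longrightarrow> p \<in> dstates D \<Longrightarrow> S \<subseteq> dalph D \<Longrightarrow> finite (reachable D S p)"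
  using reachable_subset_dstates finite_subset unfolding is_dpa_def by metis

definition bottom_state :: "'a dpa \<Rightarrow> 'a set \<Rightarrow> nat \<Rightarrow> bool" where
  "bottom_state D S b \<longleftrightarrow> (\<forall>q\<in>reachable D S b. b \<in> reachable D S q)"

lemma ex_bottom_state:
  assumes "is_dpa D" "p \<in> dstates D" "S \<subseteq> dalph D"
  shows "\<exists>b\<in>reachable D S p. bottom_state D S b"
proof -
  obtain b where b: "b \<in> reachable D S p"
    and minimal: "\<And>q. q \<in> reachable D S p \<Longrightarrow> card (reachable D S b) \<le> card (reachable D S q)"
    using ex_has_least_nat[of "\<lambda>q. q \<in> reachable D S p" p "\<lambda>q. card (reachable D S q)"]
      reachable_refl by blast
  have "b \<in> dstates D" using b reachable_subset_dstates assms by blast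
  have "b \<in> reachable D S q" if q: "q \<in> reachable D S b" for q
  proof -
    have "reachable D S q \<subseteq> reachable D S b" using reachable_trans q by blast
    moreover have "card (reachable D S b) \<le> card (reachable D S q)"
      using minimal reachable_trans[OF b q] by blast
    ultimately have "reachable D S q = reachable D S b"
      using card_seteq finite_reachable[OF assms(1) \<open>b \<in> dstates D\<close> assms(3)] by blast
    then show ?thesis using reachable_refl by blast
  qed
  then show ?thesis using b unfolding bottom_state_def by blast
qed

lemma ex_loop_through_letter:
  assumes "bottom_state D S b" "z \<in> reachable D S b" "a \<in> S"
  shows "\<exists>x. set x \<subseteq> S \<and> a \<in> set x \<and> dpa_steps D z x = z"
proof -
  have "dpa_steps D z [a] \<in> reachable D S b"
    using reachable_trans[OF assms(2) reachableI[of "[a]"]] assms(3) by auto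
  then have "b \<in> reachable D S (dpa_steps D z [a])"
    using assms(1) unfolding bottom_state_def by blast
  then obtain xs where xs: "set xs \<subseteq> S" "dpa_steps D (dtrans D z a) xs = b"
    unfolding reachable_def by auto
  obtain ys where ys: "set ys \<subseteq> S" "dpa_steps D b ys = z"
    using assms(2) unfolding reachable_def by blast
  show ?thesis using xs ys assms(3) by (intro exI[of _ "a # xs @ ys"]) auto
qed

definition lasso :: "'a list \<Rightarrow> 'a list \<Rightarrow> nat \<Rightarrow> 'a" where
  "lasso u v k = (if k < length u then u ! k else v ! ((k - length u) mod length v))"

lemma lasso_shift: "lasso u v (length u + j) = v ! (j mod length v)"
  by (simp add: lasso_def)

lemma lasso_in_lists: "v \<noteq> [] \<Longrightarrow> set u \<subseteq> S \<Longrightarrow> set v \<subseteq> S \<Longrightarrow> lasso u v k \<in> S"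
  by (auto simp: lasso_def)

lemma INFM_periodic:
  fixes f :: "nat \<Rightarrow> 'a" and L p :: nat
  assumes "0 < p" and periodic: "\<And>j. f (L + j) = g (j mod p)"
  shows "(\<exists>\<^sub>\<infinity>k. P (f k)) \<longleftrightarrow> (\<exists>j<p. P (g j))"
proof
  assume "\<exists>\<^sub>\<infinity>k. P (f k)"
  then obtain k where "k \<ge> L" "P (f k)" unfolding INFM_nat_le by blast
  moreover have "f k = g ((k - L) mod p)" using periodic[of "k - L"] \<open>k \<ge> L\<close> by simp
  ultimately show "\<exists>j<p. P (g j)" using \<open>0 < p\<close> by (metis mod_less_divisor)
next
  assume "\<exists>j<p. P (g j)"
  then obtain j where "j < p" "P (g j)" by blast
  have "P (f (L + j + p * n))" for n
    using periodic[of "j + p * n"] \<open>j < p\<close> \<open>P (g j)\<close> by (simp add: add.assoc)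
  moreover have "n < L + j + p * Suc n" for n
    using mult_le_mono1[of 1 p "Suc n"] \<open>0 < p\<close> by simp
  ultimately show "\<exists>\<^sub>\<infinity>k. P (f k)" unfolding INFM_nat by metis
qed

definition loop_colours :: "'a dpa \<Rightarrow> nat \<Rightarrow> 'a list \<Rightarrow> nat set" where
  "loop_colours D z v = (\<lambda>j. dcol D (dpa_steps D z (take j v)) (v ! j)) ` {..<length v}"

lemma finite_loop_colours: "finite (loop_colours D z v)"
  unfolding loop_colours_def by simp

lemma loop_colours_nonempty: "v \<noteq> [] \<Longrightarrow> loop_colours D z v \<noteq> {}"
  unfolding loop_colours_def by (simp add: lessThan_empty_iff)

lemma loop_colours_append:
  assumes "dpa_steps D z x = z"
  shows "loop_colours D z (x @ y) = loop_colours D z x \<union> loop_colours D z y"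
proof -
  let ?c = "\<lambda>v j. dcol D (dpa_steps D z (take j v)) (v ! j)"
  have "{..<length (x @ y)} = {..<length x} \<union> (+) (length x) ` {..<length y}"
    by (simp add: lessThan_atLeast0 ivl_disj_un_two(3) add.commute)
  moreover have "?c (x @ y) ` {..<length x} = ?c x ` {..<length x}"
    by (rule image_cong) (simp_all add: nth_append)
  moreover have "?c (x @ y) ` (+) (length x) ` {..<length y} = ?c y ` {..<length y}"
    unfolding image_image using assms by (simp add: nth_append)
  ultimately show ?thesis
    unfolding loop_colours_def by (simp add: image_Un)
qed

lemma Min_loop_colours_append:
  assumes "dpa_steps D z x = z" "x \<noteq> []" "y \<noteq> []"
  shows "Min (loop_colours D z (x @ y)) = min (Min (loop_colours D z x)) (Min (loop_colours D z y))"
  unfolding loop_colours_append[OF assms(1)]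
  using Min_Un finite_loop_colours loop_colours_nonempty assms(2,3) by metis

lemma lasso_in_dpa_lang:
  assumes "v \<noteq> []" "dpa_steps D (dinit D) u = z" "dpa_steps D z v = z"
    and "\<And>k. lasso u v k \<in> dalph D"
  shows "lasso u v \<in> dpa_lang D \<longleftrightarrow> even (Min (loop_colours D z v))"
proof -
  let ?w = "lasso u v" and ?p = "length v"
  have "map ?w [0..<length u] = u" by (rule nth_equalityI) (auto simp: lasso_def)
  then have start: "dpa_run D ?w (length u) = z" using assms(2) by (simp add: dpa_run_eq_steps)
  have run: "dpa_run D ?w (length u + j) = dpa_steps D z (take (j mod ?p) v)" for j
  proof (induction j)
    case 0
    then show ?case using start by simp
  next
    case (Suc j)
    have "dpa_run D ?w (length u + Suc j) = dpa_steps D z (take (Suc (j mod ?p)) v)"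
      using Suc assms(1) by (simp add: dpa_run_def lasso_shift take_Suc_conv_app_nth)
    also have "\<dots> = dpa_steps D z (take (Suc j mod ?p) v)"
      using assms(3) by (cases "Suc (j mod ?p) = ?p") (simp_all add: mod_Suc)
    finally show ?case .
  qed
  define g where "g j = dcol D (dpa_steps D z (take j v)) (v ! j)" for j
  have col: "dcol D (dpa_run D ?w (length u + j)) (?w (length u + j)) = g (j mod ?p)" for j
    by (simp add: run lasso_shift g_def)
  have "(\<exists>\<^sub>\<infinity>i. dcol D (dpa_run D ?w i) (?w i) = c) \<longleftrightarrow> (\<exists>j<?p. g j = c)" for c
    using INFM_periodic[where f = "\<lambda>i. dcol D (dpa_run D ?w i) (?w i)" and P = "\<lambda>c'. c' = c",
        OF _ col] assms(1) by simp
  then have "{c. \<exists>\<^sub>\<infinity>i. dcol D (dpa_run D ?w i) (?w i) = c} = loop_colours D z v"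
    unfolding loop_colours_def g_def by auto
  then have "(LEAST c. \<exists>\<^sub>\<infinity>i. dcol D (dpa_run D ?w i) (?w i) = c) = Min (loop_colours D z v)"
    using Least_Min[of "\<lambda>c. \<exists>\<^sub>\<infinity>i. dcol D (dpa_run D ?w i) (?w i) = c"]
      finite_loop_colours[of D z v] loop_colours_nonempty[OF assms(1), of D z] by auto
  then show ?thesis using assms(4) unfolding dpa_lang_def by simp
qed

subsection \<open>The hard family of LDBAs\<close>

text \<open>The alphabet type of the automata is fixed to \<open>nat\<close>, so a letter \<open>(i, J)\<close> with a
  finite set \<open>J\<close> is encoded as a natural number.\<close>

definition letter :: "nat \<Rightarrow> nat set \<Rightarrow> nat" where
  "letter i J = prod_encode (i, set_encode J)"

definition letter_index :: "nat \<Rightarrow> nat" where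
  "letter_index a = fst (prod_decode a)"

definition letter_set :: "nat \<Rightarrow> nat set" where
  "letter_set a = set_decode (snd (prod_decode a))"

lemma letter_index_letter [simp]: "letter_index (letter i J) = i"
  by (simp add: letter_index_def letter_def)

lemma letter_set_letter [simp]: "finite J \<Longrightarrow> letter_set (letter i J) = J"
  by (simp add: letter_set_def letter_def)

definition letters :: "nat set \<Rightarrow> nat set" where
  "letters I = {letter i J | i J. i \<in> I \<and> J \<subseteq> I}"

definition letters_avoiding :: "nat set \<Rightarrow> nat \<Rightarrow> nat set" where
  "letters_avoiding I x = {letter i J | i J. i \<in> I \<and> J \<subseteq> I \<and> x \<notin> J}"

lemma finite_letters:
  assumes "finite I"
  shows "finite (letters I)"
proof -
  have "letters I = (\<lambda>(i, J). letter i J) ` (I \<times> Pow I)"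
    unfolding letters_def by auto
  then show ?thesis using assms by simp
qed

lemma letters_mono: "I \<subseteq> I' \<Longrightarrow> letters I \<subseteq> letters I'"
  unfolding letters_def by blast

lemma letters_avoiding_subset: "letters_avoiding I x \<subseteq> letters I"
  unfolding letters_def letters_avoiding_def by blast

lemma letters_Diff_subset_avoiding: "letters (I - {x}) \<subseteq> letters_avoiding I x"
  unfolding letters_def letters_avoiding_def by blast

lemma letters_avoidingD:
  assumes "a \<in> letters_avoiding I x" "finite I"
  shows "letter_index a \<in> I" "x \<notin> letter_set a"
proof -
  obtain i J where "a = letter i J" "i \<in> I" "J \<subseteq> I" "x \<notin> J"
    using assms(1) unfolding letters_avoiding_def by blast
  moreover have "finite J" using \<open>J \<subseteq> I\<close> assms(2) by (rule finite_subset)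
  ultimately show "letter_index a \<in> I" "x \<notin> letter_set a" by simp_all
qed

text \<open>State \<open>0\<close> waits and guesses an index \<open>i\<close> by moving to state \<open>i + 1\<close>; there the run dies
  on letters \<open>(k, J)\<close> with \<open>i \<in> J\<close> and accepts on the letters \<open>(i, J)\<close> with \<open>i \<notin> J\<close>.\<close>

definition hard_ldba :: "nat \<Rightarrow> nat ldba" where
  "hard_ldba m = \<lparr> lstates = {0..m}, linit = 0, lalph = letters {..<m},
     ltrans = (\<lambda>q a. if q = 0 then {0..m} else if q - 1 \<in> letter_set a then {} else {q}),
     lacc = {(q, a, q) | q a. 1 \<le> q \<and> q \<le> m \<and> a \<in> letters {..<m} \<and>
                              letter_index a = q - 1 \<and> q - 1 \<notin> letter_set a},
     ldet = {1..m} \<rparr>"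

lemma is_ldba_hard_ldba: "is_ldba (hard_ldba m)"
  unfolding is_ldba_def hard_ldba_def by (auto simp: finite_letters card_insert_if)

lemma card_lstates_hard_ldba: "card (lstates (hard_ldba m)) = Suc m"
  by (simp add: hard_ldba_def)

lemma hard_ldba_lang:
  "ldba_lang (hard_ldba m) = {w. (\<forall>k. w k \<in> letters {..<m}) \<and>
     (\<exists>i<m. \<not> (\<exists>\<^sub>\<infinity>k. i \<in> letter_set (w k)) \<and> (\<exists>\<^sub>\<infinity>k. letter_index (w k) = i))}"
    (is "_ = {w. ?alph w \<and> ?good w}")
proof (intro set_eqI iffI)
  fix w assume "w \<in> ldba_lang (hard_ldba m)"
  then obtain r where alph: "?alph w" and run: "ldba_run (hard_ldba m) w r"
    and acc: "\<exists>\<^sub>\<infinity>k. (r k, w k, r (Suc k)) \<in> lacc (hard_ldba m)"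
    unfolding ldba_lang_def by (auto simp: hard_ldba_def)
  from acc obtain k0 where k0: "(r k0, w k0, r (Suc k0)) \<in> lacc (hard_ldba m)"
    by (auto simp: INFM_nat)
  define i where "i = r k0 - 1"
  have "1 \<le> r k0" "r k0 \<le> m" using k0 by (auto simp: hard_ldba_def)
  have stay: "r (k0 + j) = r k0 \<and> i \<notin> letter_set (w (k0 + j))" for j
  proof (induction j)
    case 0
    then show ?case using k0 by (auto simp: hard_ldba_def i_def)
  next
    case (Suc j)
    have "r (Suc (k0 + j)) \<in> ltrans (hard_ldba m) (r (k0 + j)) (w (k0 + j))"
         "r (Suc (k0 + Suc j)) \<in> ltrans (hard_ldba m) (r (k0 + Suc j)) (w (k0 + Suc j))"
      using run unfolding ldba_run_def by blast+
    then show ?case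
      using Suc \<open>1 \<le> r k0\<close> by (auto simp: hard_ldba_def i_def split: if_splits)
  qed
  have "\<not> (\<exists>\<^sub>\<infinity>k. i \<in> letter_set (w k))"
    unfolding INFM_nat_le using stay by (metis le_add_diff_inverse)
  moreover have "\<exists>\<^sub>\<infinity>k. letter_index (w k) = i"
    unfolding INFM_nat_le
  proof
    fix n
    obtain k where "k \<ge> max n k0" "(r k, w k, r (Suc k)) \<in> lacc (hard_ldba m)"
      using acc unfolding INFM_nat_le by blast
    moreover have "r k = r k0" using stay[of "k - k0"] \<open>k \<ge> max n k0\<close> by simp
    ultimately show "\<exists>k\<ge>n. letter_index (w k) = i" by (auto simp: hard_ldba_def i_def)
  qed
  moreover have "i < m" using \<open>1 \<le> r k0\<close> \<open>r k0 \<le> m\<close> by (simp add: i_def)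
  ultimately show "w \<in> {w. ?alph w \<and> ?good w}" using alph by blast
next
  fix w assume "w \<in> {w. ?alph w \<and> ?good w}"
  then obtain i where alph: "?alph w" and "i < m"
    and fin: "\<not> (\<exists>\<^sub>\<infinity>k. i \<in> letter_set (w k))" and inf: "\<exists>\<^sub>\<infinity>k. letter_index (w k) = i"
    by blast
  from fin obtain N where N: "\<And>k. k > N \<Longrightarrow> i \<notin> letter_set (w k)"
    by (auto simp: INFM_nat)
  define r where "r k = (if k \<le> N then 0 else Suc i)" for k
  have "ldba_run (hard_ldba m) w r"
    using N \<open>i < m\<close> unfolding ldba_run_def by (auto simp: r_def hard_ldba_def)
  moreover have "\<exists>\<^sub>\<infinity>k. (r k, w k, r (Suc k)) \<in> lacc (hard_ldba m)"
    unfolding INFM_nat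
  proof
    fix n
    obtain k where "k > max n N" "letter_index (w k) = i"
      using inf unfolding INFM_nat by blast
    then show "\<exists>k>n. (r k, w k, r (Suc k)) \<in> lacc (hard_ldba m)"
      using N \<open>i < m\<close> alph by (auto simp: r_def hard_ldba_def intro!: exI[of _ k])
  qed
  ultimately show "w \<in> ldba_lang (hard_ldba m)"
    using alph unfolding ldba_lang_def by (auto simp: hard_ldba_def)
qed

lemma lasso_in_hard_ldba_lang:
  assumes "v \<noteq> []" "set u \<subseteq> letters {..<m}" "set v \<subseteq> letters {..<m}"
  shows "lasso u v \<in> ldba_lang (hard_ldba m) \<longleftrightarrow>
    (\<exists>i<m. (\<exists>a\<in>set v. letter_index a = i) \<and> (\<forall>a\<in>set v. i \<notin> letter_set a))"
proof -
  have periodic: "\<And>j. lasso u v (length u + j) = v ! (j mod length v)"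
    by (rule lasso_shift)
  have "(\<exists>\<^sub>\<infinity>k. P (lasso u v k)) \<longleftrightarrow> (\<exists>j<length v. P (v ! j))" for P
    using INFM_periodic[where f = "lasso u v", OF _ periodic] assms(1) by simp
  also have "(\<exists>j<length v. P (v ! j)) \<longleftrightarrow> (\<exists>a\<in>set v. P a)" for P
    by (metis in_set_conv_nth)
  finally have inf: "(\<exists>\<^sub>\<infinity>k. P (lasso u v k)) \<longleftrightarrow> (\<exists>a\<in>set v. P a)" for P .
  have "(\<exists>\<^sub>\<infinity>k. i \<in> letter_set (lasso u v k)) \<longleftrightarrow> (\<exists>a\<in>set v. i \<in> letter_set a)"
       "(\<exists>\<^sub>\<infinity>k. letter_index (lasso u v k) = i) \<longleftrightarrow> (\<exists>a\<in>set v. letter_index a = i)" for i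
    by (rule inf)+
  then show ?thesis
    unfolding hard_ldba_lang mem_Collect_eq using lasso_in_lists[OF assms] by blast
qed

subsection \<open>Deterministic parity automata for the hard family\<close>

locale dpa_for_hard_ldba =
  fixes D :: "nat dpa" and m :: nat
  assumes is_dpa: "is_dpa D"
    and lang_eq: "dpa_lang D = ldba_lang (hard_ldba m)"
    and m_pos: "0 < m"
begin

abbreviation reach :: "nat set" where
  "reach \<equiv> reachable D (letters {..<m}) (dinit D)"

lemma letters_subset_dalph: "letters {..<m} \<subseteq> dalph D"
proof
  fix a assume a: "a \<in> letters {..<m}"
  have "letter 0 {} \<in> letters {..<m}" using m_pos unfolding letters_def by blast
  then have "lasso [a] [letter 0 {}] \<in> ldba_lang (hard_ldba m)"
    using lasso_in_hard_ldba_lang[of "[letter 0 {}]" "[a]" m] a m_pos by auto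
  then have "lasso [a] [letter 0 {}] 0 \<in> dalph D" using lang_eq unfolding dpa_lang_def by blast
  then show "a \<in> dalph D" by (simp add: lasso_def)
qed

lemma reach_subset_dstates: "reach \<subseteq> dstates D"
  using reachable_subset_dstates is_dpa letters_subset_dalph unfolding is_dpa_def by blast

lemma reachable_from_reach:
  "p \<in> reach \<Longrightarrow> I \<subseteq> {..<m} \<Longrightarrow> S \<subseteq> letters I \<Longrightarrow> reachable D S p \<subseteq> reach"
  using reachable_trans reachable_mono letters_mono by (metis order_trans subsetI)

lemma finite_reachable_from_reach:
  "p \<in> reach \<Longrightarrow> I \<subseteq> {..<m} \<Longrightarrow> S \<subseteq> letters I \<Longrightarrow> finite (reachable D S p)"
  using finite_reachable is_dpa reach_subset_dstates letters_subset_dalph letters_mono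
  by (meson order_trans subsetD)

lemma loop_accepting_iff:
  assumes "z \<in> reach" "x \<noteq> []" "set x \<subseteq> letters {..<m}" "dpa_steps D z x = z"
  shows "even (Min (loop_colours D z x)) \<longleftrightarrow>
    (\<exists>i<m. (\<exists>a\<in>set x. letter_index a = i) \<and> (\<forall>a\<in>set x. i \<notin> letter_set a))"
proof -
  obtain u where u: "set u \<subseteq> letters {..<m}" "dpa_steps D (dinit D) u = z"
    using assms(1) unfolding reachable_def by blast
  have "lasso u x k \<in> dalph D" for k
    using lasso_in_lists[OF assms(2) u(1) assms(3)] letters_subset_dalph by blast
  then have "even (Min (loop_colours D z x)) \<longleftrightarrow> lasso u x \<in> ldba_lang (hard_ldba m)"
    using lasso_in_dpa_lang[OF assms(2) u(2) assms(4)] lang_eq by simp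
  then show ?thesis using lasso_in_hard_ldba_lang[OF assms(2) u(1) assms(3)] by simp
qed

lemma loop_through_letter_accepting:
  assumes I: "finite I" "I \<subseteq> {..<m}" and "i \<in> I" "z \<in> reach"
    and x: "set x \<subseteq> letters_avoiding I i" "letter i J \<in> set x" "dpa_steps D z x = z"
  shows "even (Min (loop_colours D z x))"
proof -
  have "set x \<subseteq> letters {..<m}"
    using x(1) letters_avoiding_subset letters_mono[OF I(2)] by blast
  moreover have "\<forall>a\<in>set x. i \<notin> letter_set a"
    using x(1) letters_avoidingD(2)[OF _ I(1)] by blast
  moreover have "\<exists>a\<in>set x. letter_index a = i" and "i < m"
    using x(2) \<open>i \<in> I\<close> I(2) by force+
  moreover have "x \<noteq> []" using x(2) by auto
  ultimately show ?thesis using loop_accepting_iff[OF \<open>z \<in> reach\<close> _ _ x(3)] by blast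
qed

lemma no_common_loops:
  assumes I: "finite I" "I \<subseteq> {..<m}" and ij: "i \<in> I" "j \<in> I" "i \<noteq> j" and "z \<in> reach"
    and x: "set x \<subseteq> letters_avoiding I i" "letter i (I - {i}) \<in> set x" "dpa_steps D z x = z"
    and y: "set y \<subseteq> letters_avoiding I j" "letter j (I - {j}) \<in> set y" "dpa_steps D z y = z"
  shows False
proof -
  have "x \<noteq> []" "y \<noteq> []" using x(2) y(2) by auto
  have "set (x @ y) \<subseteq> letters {..<m}"
    using x(1) y(1) letters_avoiding_subset letters_mono[OF I(2)] by fastforce
  moreover have "even (Min (loop_colours D z (x @ y)))"
    using loop_through_letter_accepting[OF I ij(1) \<open>z \<in> reach\<close> x]
      loop_through_letter_accepting[OF I ij(2) \<open>z \<in> reach\<close> y]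
      Min_loop_colours_append[OF x(3) \<open>x \<noteq> []\<close> \<open>y \<noteq> []\<close>] by (simp add: min_def)
  ultimately obtain i' a where a: "a \<in> set (x @ y)" "letter_index a = i'"
    and killed: "\<forall>a\<in>set (x @ y). i' \<notin> letter_set a"
    using loop_accepting_iff[OF \<open>z \<in> reach\<close>, of "x @ y"] x(3) y(3) \<open>x \<noteq> []\<close> by auto
  have "i' \<in> I" using a x(1) y(1) letters_avoidingD(1)[OF _ I(1)] by auto
  text \<open>\<open>i'\<close> is killed by the letter \<open>(j, I - {j})\<close> if \<open>i' = i\<close>, and by \<open>(i, I - {i})\<close> otherwise.\<close>
  moreover have "i' \<notin> letter_set (letter i (I - {i}))" "i' \<notin> letter_set (letter j (I - {j}))"
    using killed x(2) y(2) by auto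
  ultimately show False
    using ij I(1) by (cases "i' = i") auto
qed

lemma bottom_components_disjoint:
  assumes I: "finite I" "I \<subseteq> {..<m}" and ij: "i \<in> I" "j \<in> I" "i \<noteq> j"
    and b: "b i \<in> reach" "bottom_state D (letters_avoiding I i) (b i)"
           "b j \<in> reach" "bottom_state D (letters_avoiding I j) (b j)"
  shows "reachable D (letters_avoiding I i) (b i) \<inter> reachable D (letters_avoiding I j) (b j) = {}"
proof (rule ccontr)
  assume "\<not> ?thesis"
  then obtain z where zi: "z \<in> reachable D (letters_avoiding I i) (b i)"
    and zj: "z \<in> reachable D (letters_avoiding I j) (b j)" by blast
  have "z \<in> reach"
    using reachable_from_reach[OF b(1) I(2) letters_avoiding_subset] zi by blast
  have "letter i (I - {i}) \<in> letters_avoiding I i" "letter j (I - {j}) \<in> letters_avoiding I j"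
    using ij unfolding letters_avoiding_def by blast+
  then obtain x y where
      "set x \<subseteq> letters_avoiding I i" "letter i (I - {i}) \<in> set x" "dpa_steps D z x = z"
      "set y \<subseteq> letters_avoiding I j" "letter j (I - {j}) \<in> set y" "dpa_steps D z y = z"
    using ex_loop_through_letter[OF b(2) zi] ex_loop_through_letter[OF b(4) zj] by metis
  then show False using no_common_loops[OF I ij \<open>z \<in> reach\<close>] by blast
qed

lemma fact_le_card_reachable:
  assumes "finite I" "I \<subseteq> {..<m}" "p \<in> reach"
  shows "fact (card I) \<le> card (reachable D (letters I) p)"
  using assms
proof (induction "card I" arbitrary: I p)
  case 0
  have "reachable D (letters I) p \<noteq> {}" using reachable_refl by blast
  then show ?case
    using finite_reachable_from_reach[OF 0(4,3) order_refl] 0(1)[symmetric]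
    by (simp add: Suc_leI card_gt_0_iff)
next
  case (Suc k)
  have p: "p \<in> dstates D" using Suc.prems(3) reach_subset_dstates by blast
  have avoiding_dalph: "letters_avoiding I i \<subseteq> dalph D" for i
    using letters_avoiding_subset letters_mono[OF Suc.prems(2)] letters_subset_dalph by blast
  have "\<forall>i\<in>I. \<exists>b. b \<in> reachable D (letters_avoiding I i) p \<and> bottom_state D (letters_avoiding I i) b"
    using ex_bottom_state[OF is_dpa p avoiding_dalph] by blast
  from bchoice[OF this] obtain b where b: "\<And>i. i \<in> I \<Longrightarrow>
      b i \<in> reachable D (letters_avoiding I i) p \<and> bottom_state D (letters_avoiding I i) (b i)"
    by blast
  define B where "B i = reachable D (letters_avoiding I i) (b i)" for i
  have b_reach: "b i \<in> reach" if "i \<in> I" for i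
    using reachable_from_reach[OF Suc.prems(3,2) letters_avoiding_subset] b[OF that] by blast
  have finite_B: "finite (B i)" if "i \<in> I" for i
    unfolding B_def using finite_reachable_from_reach[OF b_reach[OF that] Suc.prems(2)]
      letters_avoiding_subset by blast
  have card_B: "fact k \<le> card (B i)" if "i \<in> I" for i
  proof -
    have "k = card (I - {i})" using Suc.hyps(2) Suc.prems(1) that by simp
    then have "fact k \<le> card (reachable D (letters (I - {i})) (b i))"
      using Suc.hyps(1)[of "I - {i}" "b i"] Suc.prems(1,2) b_reach[OF that] by auto
    also have "\<dots> \<le> card (B i)"
      unfolding B_def using finite_B[OF that, unfolded B_def]
      by (intro card_mono reachable_mono letters_Diff_subset_avoiding)
    finally show ?thesis .
  qed
  have "B i \<subseteq> reachable D (letters I) p" if "i \<in> I" for i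
    using b[OF that] reachable_trans reachable_mono[OF letters_avoiding_subset]
    unfolding B_def by blast
  then have "(\<Union>i\<in>I. B i) \<subseteq> reachable D (letters I) p" by blast
  have "fact (Suc k) = (\<Sum>i\<in>I. fact k :: nat)" using Suc.hyps(2)[symmetric] by simp
  also have "\<dots> \<le> (\<Sum>i\<in>I. card (B i))" using card_B by (intro sum_mono)
  also have "\<dots> = card (\<Union>i\<in>I. B i)"
  proof -
    have "\<forall>i\<in>I. \<forall>j\<in>I. i \<noteq> j \<longrightarrow> B i \<inter> B j = {}"
      unfolding B_def using bottom_components_disjoint[OF Suc.prems(1,2)] b b_reach by blast
    then show ?thesis using card_UN_disjoint[OF Suc.prems(1), of B] finite_B by simp
  qed
  also have "\<dots> \<le> card (reachable D (letters I) p)"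
    using \<open>(\<Union>i\<in>I. B i) \<subseteq> _\<close> finite_reachable_from_reach[OF Suc.prems(3,2) order_refl]
    by (rule card_mono[rotated])
  finally show ?case using Suc.hyps(2) by simp
qed

lemma fact_le_card_dstates: "fact m \<le> card (dstates D)"
proof -
  have "dinit D \<in> reach" by (rule reachable_refl)
  then have "fact m \<le> card reach" using fact_le_card_reachable[of "{..<m}"] by simp
  also have "\<dots> \<le> card (dstates D)"
    using reach_subset_dstates is_dpa unfolding is_dpa_def by (intro card_mono) auto
  finally show ?thesis .
qed

end

subsection \<open>From \<open>m!\<close> to \<open>2\<^bsup>\<Omega>(n log n)\<^esup>\<close>\<close>

lemma power_mult_fact_le_fact_add: "k ^ j * fact k \<le> (fact (k + j) :: nat)"
proof (induction j)
  case 0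
  then show ?case by simp
next
  case (Suc j)
  have "k ^ Suc j * fact k = k * (k ^ j * fact k)" by simp
  also have "\<dots> \<le> (k + Suc j) * fact (k + j)" using Suc by (intro mult_mono) auto
  finally show ?case by simp
qed

lemma self_power_le_fact_double: "k ^ k \<le> (fact (2 * k) :: nat)"
  using power_mult_fact_le_fact_add[of k k] order_trans[of "k ^ k" "k ^ k * fact k"]
  by (simp add: mult_2)

lemma two_powr_n_log_n_le_fact:
  fixes n :: nat
  assumes "16 \<le> n"
  shows "2 powr (1/8 * real n * log 2 (real n)) \<le> fact (n - 1)"
proof -
  define k where "k = (n - 1) div 2"
  have "real n \<le> 4 * real k" and "0 < real k" using assms by (auto simp: k_def)
  have "4 \<le> log 2 (real n)" using assms le_log2_of_power[of 4 n] by simp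
  have "log 2 (real n) \<le> log 2 (4 * real k)" using \<open>real n \<le> 4 * real k\<close> assms by simp
  also have "\<dots> = 2 + log 2 (real k)"
    using \<open>0 < real k\<close> log_pow_cancel[of 2 2] by (simp add: log_mult)
  finally have "log 2 (real n) / 2 \<le> log 2 (real k)" using \<open>4 \<le> log 2 (real n)\<close> by simp
  then have "real n / 4 * (log 2 (real n) / 2) \<le> real k * log 2 (real k)"
    using \<open>real n \<le> 4 * real k\<close> \<open>4 \<le> log 2 (real n)\<close> by (intro mult_mono) auto
  then have "1/8 * real n * log 2 (real n) \<le> real k * log 2 (real k)" by simp
  then have "2 powr (1/8 * real n * log 2 (real n)) \<le> 2 powr (log 2 (real k) * real k)"
    by (simp add: mult.commute)
  also have "\<dots> = real (k ^ k)"
    using \<open>0 < real k\<close> by (simp add: powr_powr[symmetric] powr_realpow)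
  also have "\<dots> \<le> real (fact (2 * k))"
    using self_power_le_fact_double by (simp only: of_nat_le_iff)
  also have "\<dots> \<le> fact (n - 1)"
    unfolding of_nat_fact by (rule fact_mono) (simp add: k_def)
  finally show ?thesis .
qed

theorem mainTheorem6:
  fixes T :: "nat ldba \<Rightarrow> nat dpa"
  assumes "\<forall>A. is_ldba A \<longrightarrow> is_dpa (T A) \<and> dpa_lang (T A) = ldba_lang A"
  shows "\<exists>c>0. \<exists>N. \<forall>n\<ge>N. \<exists>A. is_ldba A \<and> card (lstates A) = n \<and>
           real (card (dstates (T A))) \<ge> 2 powr (c * real n * log 2 (real n))"
proof (intro exI[of _ "1/8"] conjI exI[of _ 16] allI impI)
  fix n :: nat
  assume n: "16 \<le> n"
  define m where "m = n - 1"
  interpret dpa_for_hard_ldba "T (hard_ldba m)" m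
    using assms is_ldba_hard_ldba n by unfold_locales (auto simp: m_def)
  have "2 powr (1/8 * real n * log 2 (real n)) \<le> fact m"
    using two_powr_n_log_n_le_fact[OF n] by (simp add: m_def)
  also have "\<dots> \<le> real (card (dstates (T (hard_ldba m))))"
    using fact_le_card_dstates by (metis of_nat_fact of_nat_le_iff)
  finally have "2 powr (1/8 * real n * log 2 (real n)) \<le> real (card (dstates (T (hard_ldba m))))" .
  moreover have "card (lstates (hard_ldba m)) = n"
    using n by (simp add: card_lstates_hard_ldba m_def)
  ultimately show "\<exists>A. is_ldba A \<and> card (lstates A) = n \<and>
      2 powr (1/8 * real n * log 2 (real n)) \<le> real (card (dstates (T A)))"
    using is_ldba_hard_ldba by blast
qed simp

end
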